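(* Let $p(t)=\sum_{k=0}^\infty a_kt^k$ be a real power series with $-1<a_i<1$ for all $i\ge0$ and $\sum_{i=0}^\infty|a_i|\le1$. Let $p^{[1]}=p$, $p^{[n+1]}=p(p^{[n]})$, $p^{[n]}(t)=\sum_{k=0}^\infty a_k^{[n]}t^k$, and $a^{[n]}=\sup\{|a_k^{[n]}|:k\ge1\}$. Then $\lim_{n\to\infty}a^{[n]}=0$.
   Context: Composition is composition of formal power series; under $\sum|a_i|\le1$ the coefficients of each iterate are given by absolutely convergent sums. *)

theory Defs
  imports "HOL-Analysis.Analysis" "HOL-Computational_Algebra.Formal_Power_Series"
begin

text \<open>Composition p(q) of real formal power series, where the constant term of q
  need not vanish: the k-th coefficient is the (absolutely convergent, under the
  standing hypothesis) series \<open>\<Sum>i. a_i * [t^k] q^i\<close>.\<close>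
definition fps_comp_gen :: "real fps \<Rightarrow> real fps \<Rightarrow> real fps" where
  "fps_comp_gen p q = Abs_fps (\<lambda>k. \<Sum>i. fps_nth p i * fps_nth (q ^ i) k)"

text \<open>Iterates: p_iter p n is p^[n] for n \<ge> 1 (index 0 is unused).\<close>
fun p_iter :: "real fps \<Rightarrow> nat \<Rightarrow> real fps" where
  "p_iter p 0 = fps_X"
| "p_iter p (Suc 0) = p"
| "p_iter p (Suc (Suc n)) = fps_comp_gen p (p_iter p (Suc n))"

definition a_sup :: "real fps \<Rightarrow> nat \<Rightarrow> real" where
  "a_sup p n = (SUP k\<in>{1..}. \<bar>fps_nth (p_iter p n) k\<bar>)"

end

theory Submission
  imports Defs "HOL-Real_Asymp.Real_Asymp"
begin

text \<open>Replacing every coefficient of p by its absolute value majorises all coefficients of all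
  iterates, so it suffices to treat a series P with nonnegative coefficients, each below 1, of
  total mass at most 1. For such series composition is associative, hence
  P^[n+2] = P^[n+1] \<circ> P, i.e. the k-th coefficient of P^[n+2] is \<Sum>i. c_i [t^k] P^i with
  c = P^[n+1]. Two facts then give the decay of the supremum over k \<ge> 1. First, the
  coefficients of P^i are uniformly small for large i: either the mass of P is below 1, or P
  has two atoms of positive weight, and expanding P^i binomially in these atoms reduces the
  claim to (N choose N div 2) / 2^N \<longrightarrow> 0. Second, each fixed coefficient c_j (j \<ge> 1) of
  the iterates tends to 0: if P_0 > 0, the constant coefficient is increasing, bounded, and grows
  by at least c_j P_0^j in each step; if P_0 = 0, then c_j obeys the contraction
  c_j' \<le> P_1^j c_j + (c_1 + ... + c_(j-1)).\<close>

section \<open>Double series with nonnegative terms\<close>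

lemma has_sum_nonneg_iterated_suminf:
  fixes u :: "nat \<Rightarrow> nat \<Rightarrow> real"
  assumes nonneg: "\<And>i k. 0 \<le> u i k" and inner: "\<And>i. summable (u i)"
    and outer: "summable (\<lambda>i. suminf (u i))"
  shows "((\<lambda>(i, k). u i k) has_sum (\<Sum>i. suminf (u i))) UNIV"
proof -
  have rows: "((\<lambda>k. (\<lambda>(i, k). u i k) (i, k)) has_sum suminf (u i)) UNIV" for i
    using sums_nonneg_imp_has_sum[OF summable_sums[OF inner[of i]]] nonneg by simp
  have total: "((\<lambda>i. suminf (u i)) has_sum (\<Sum>i. suminf (u i))) UNIV"
    by (rule sums_nonneg_imp_has_sum[OF summable_sums[OF outer]])
       (simp add: nonneg suminf_nonneg inner)
  have "(\<lambda>(i, k). u i k) summable_on Sigma UNIV (\<lambda>_. UNIV)"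
    by (rule summable_on_SigmaI[where g = "\<lambda>i. suminf (u i)"])
       (use rows total nonneg in \<open>auto simp: summable_on_def\<close>)
  then have "((\<lambda>(i, k). u i k) has_sum (\<Sum>i. suminf (u i))) (Sigma UNIV (\<lambda>_. UNIV))"
    by (intro has_sum_SigmaI[OF rows total]) auto
  then show ?thesis by simp
qed

lemma suminf_swap_nonneg:
  fixes u :: "nat \<Rightarrow> nat \<Rightarrow> real"
  assumes nonneg: "\<And>i k. 0 \<le> u i k" and inner: "\<And>i. summable (u i)"
    and outer: "summable (\<lambda>i. suminf (u i))"
  shows "summable (\<lambda>i. u i k)" "summable (\<lambda>k. \<Sum>i. u i k)"
    and "(\<Sum>k. \<Sum>i. u i k) = (\<Sum>i. \<Sum>k. u i k)"
proof -
  have "((\<lambda>(i, k). u i k) has_sum (\<Sum>i. suminf (u i))) (UNIV \<times> UNIV)"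
    using has_sum_nonneg_iterated_suminf[OF assms] by (simp only: UNIV_Times_UNIV)
  from has_sum_swap[THEN iffD1, OF this]
  have swapped: "((\<lambda>(k, i). u i k) has_sum (\<Sum>i. suminf (u i))) (UNIV \<times> UNIV)"
    by (simp only: prod.case)
  then have "(\<lambda>(k, i). u i k) summable_on (UNIV \<times> UNIV)"
    unfolding summable_on_def by blast
  then have "(\<lambda>i. u i k) summable_on UNIV" for k
    using summable_on_SigmaD1[where f = "\<lambda>k i. u i k" and A = UNIV and B = "\<lambda>_. UNIV"] by simp
  then show columns: "summable (\<lambda>i. u i k)" for k
    by (rule summable_on_imp_summable)
  have "((\<lambda>i. u i k) has_sum (\<Sum>i. u i k)) UNIV" for k
    by (intro sums_nonneg_imp_has_sum summable_sums columns nonneg)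
  then have "((\<lambda>k. \<Sum>i. u i k) has_sum (\<Sum>i. suminf (u i))) UNIV"
    by (intro has_sum_SigmaD[OF swapped]) simp
  then have "(\<lambda>k. \<Sum>i. u i k) sums (\<Sum>i. \<Sum>k. u i k)"
    by (rule has_sum_imp_sums)
  then show "summable (\<lambda>k. \<Sum>i. u i k)" "(\<Sum>k. \<Sum>i. u i k) = (\<Sum>i. \<Sum>k. u i k)"
    by (simp_all add: sums_iff)
qed

lemma has_sum_antidiagonal:
  fixes f :: "nat \<times> nat \<Rightarrow> real"
  assumes "(f has_sum S) UNIV"
  shows "((\<lambda>m. \<Sum>a\<le>m. f (a, m - a)) has_sum S) UNIV"
proof -
  have "bij_betw (\<lambda>(m :: nat, a :: nat). (a, m - a)) (SIGMA m:UNIV. {..m}) UNIV"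
    by (rule bij_betw_byWitness[where f' = "\<lambda>(a, b). (a + b, a)"]) (auto simp: image_iff)
  from has_sum_reindex_bij_betw[OF this, THEN iffD2, OF assms]
  have "((\<lambda>x. f ((\<lambda>(m, a). (a, m - a)) x)) has_sum S) (SIGMA m:UNIV. {..m})" .
  then show ?thesis
    by (rule has_sum_SigmaD) (auto intro: has_sum_finiteI)
qed

section \<open>Power series with nonnegative summable coefficients\<close>

definition nonneg_summable_fps :: "real fps \<Rightarrow> bool" where
  "nonneg_summable_fps f \<longleftrightarrow> (\<forall>k. 0 \<le> fps_nth f k) \<and> summable (fps_nth f)"

definition fps_mass :: "real fps \<Rightarrow> real" where
  "fps_mass f = (\<Sum>k. fps_nth f k)"

lemma nonneg_summable_fpsD:
  assumes "nonneg_summable_fps f"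
  shows "0 \<le> fps_nth f k" "summable (fps_nth f)"
  using assms by (auto simp: nonneg_summable_fps_def)

lemma nonneg_summable_fpsI:
  assumes "\<And>k. 0 \<le> fps_nth f k" "fps_nth f sums s"
  shows "nonneg_summable_fps f" "fps_mass f = s"
  using assms by (auto simp: nonneg_summable_fps_def fps_mass_def sums_iff)

lemma fps_nth_le_fps_mass: "nonneg_summable_fps f \<Longrightarrow> fps_nth f k \<le> fps_mass f"
  unfolding fps_mass_def nonneg_summable_fps_def
  using sum_le_suminf[of "fps_nth f" "{k}"] by auto

lemma fps_mass_nonneg: "nonneg_summable_fps f \<Longrightarrow> 0 \<le> fps_mass f"
  unfolding fps_mass_def nonneg_summable_fps_def by (auto intro: suminf_nonneg)

lemma nonneg_summable_fps_mult:
  assumes f: "nonneg_summable_fps f" and g: "nonneg_summable_fps g"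
  shows "nonneg_summable_fps (f * g)" "fps_mass (f * g) = fps_mass f * fps_mass g"
proof -
  have coeff: "fps_nth (f * g) k = (\<Sum>i\<le>k. fps_nth f i * fps_nth g (k - i))" for k
    by (simp add: fps_mult_nth atLeast0AtMost)
  have "summable (\<lambda>k. norm (fps_nth f k))" "summable (\<lambda>k. norm (fps_nth g k))"
    using f g by (auto simp: nonneg_summable_fps_def)
  from Cauchy_product_sums[OF this] have "fps_nth (f * g) sums (fps_mass f * fps_mass g)"
    by (simp add: coeff[symmetric] fps_mass_def)
  moreover have "0 \<le> fps_nth (f * g) k" for k
    unfolding coeff using f g by (auto simp: nonneg_summable_fps_def intro!: sum_nonneg)
  ultimately show "nonneg_summable_fps (f * g)" "fps_mass (f * g) = fps_mass f * fps_mass g"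
    by (auto intro: nonneg_summable_fpsI)
qed

lemma nonneg_summable_fps_one: "nonneg_summable_fps 1" "fps_mass 1 = 1"
proof -
  have "fps_nth (1 :: real fps) = (\<lambda>k. if k = 0 then 1 else 0)"
    by (simp add: fun_eq_iff)
  then have "fps_nth (1 :: real fps) sums 1"
    using sums_single[of 0 "\<lambda>_. 1 :: real"] by simp
  then show "nonneg_summable_fps 1" "fps_mass 1 = 1"
    by (auto intro: nonneg_summable_fpsI)
qed

lemma nonneg_summable_fps_power:
  assumes "nonneg_summable_fps f"
  shows "nonneg_summable_fps (f ^ n)" "fps_mass (f ^ n) = fps_mass f ^ n"
proof -
  have "nonneg_summable_fps (f ^ n) \<and> fps_mass (f ^ n) = fps_mass f ^ n"
    by (induction n) (simp_all add: nonneg_summable_fps_one nonneg_summable_fps_mult assms)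
  then show "nonneg_summable_fps (f ^ n)" "fps_mass (f ^ n) = fps_mass f ^ n"
    by auto
qed

lemma fps_nth_power_nonneg: "nonneg_summable_fps f \<Longrightarrow> 0 \<le> fps_nth (f ^ n) k"
  using nonneg_summable_fps_power(1) by (rule nonneg_summable_fpsD)

lemma fps_nth_power_le_one:
  assumes "nonneg_summable_fps f" "fps_mass f \<le> 1"
  shows "fps_nth (f ^ n) k \<le> 1"
proof -
  have "fps_nth (f ^ n) k \<le> fps_mass f ^ n"
    using fps_nth_le_fps_mass nonneg_summable_fps_power[OF assms(1)] by metis
  also have "\<dots> \<le> 1"
    using assms fps_mass_nonneg by (simp add: power_le_one)
  finally show ?thesis .
qed

lemma fps_nth_mult_le:
  assumes "nonneg_summable_fps f" "nonneg_summable_fps g" "\<And>i. fps_nth f i \<le> c"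
  shows "fps_nth (f * g) k \<le> c * fps_mass g"
proof -
  have c: "0 \<le> c" using assms(3)[of 0] nonneg_summable_fpsD(1)[OF assms(1), of 0] by linarith
  have "fps_nth (f * g) k = (\<Sum>i\<le>k. fps_nth g i * fps_nth f (k - i))"
    by (simp add: mult.commute[of f] fps_mult_nth atLeast0AtMost)
  also have "\<dots> \<le> (\<Sum>i\<le>k. fps_nth g i * c)"
    by (intro sum_mono mult_left_mono assms(3) nonneg_summable_fpsD(1)[OF assms(2)])
  also have "\<dots> = c * (\<Sum>i\<le>k. fps_nth g i)"
    by (simp add: sum_distrib_left mult.commute)
  also have "\<dots> \<le> c * fps_mass g"
    unfolding fps_mass_def using c assms(2)
    by (intro mult_left_mono sum_le_suminf) (auto simp: nonneg_summable_fps_def)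
  finally show ?thesis .
qed

section \<open>Composition\<close>

lemma fps_comp_gen_nth: "fps_nth (fps_comp_gen p q) k = (\<Sum>i. fps_nth p i * fps_nth (q ^ i) k)"
  by (simp add: fps_comp_gen_def)

lemma summable_fps_comp_gen_terms:
  assumes X: "nonneg_summable_fps X" and C: "nonneg_summable_fps C" "fps_mass C \<le> 1"
  shows "summable (\<lambda>i. fps_nth X i * fps_nth (C ^ i) k)"
proof (rule summable_comparison_test'[where N = 0])
  show "summable (fps_nth X)" using X by (rule nonneg_summable_fpsD)
  show "norm (fps_nth X i * fps_nth (C ^ i) k) \<le> fps_nth X i" for i
    using nonneg_summable_fpsD(1)[OF X] fps_nth_power_nonneg[OF C(1)] fps_nth_power_le_one[OF C]
    by (simp add: abs_mult mult_left_le)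
qed

lemma nonneg_summable_fps_comp_gen:
  assumes X: "nonneg_summable_fps X" and C: "nonneg_summable_fps C" "fps_mass C \<le> 1"
  shows "nonneg_summable_fps (fps_comp_gen X C)" "fps_mass (fps_comp_gen X C) \<le> fps_mass X"
proof -
  define u where "u i k = fps_nth X i * fps_nth (C ^ i) k" for i k
  have Ci: "nonneg_summable_fps (C ^ i)" "fps_mass (C ^ i) = fps_mass C ^ i" for i
    using nonneg_summable_fps_power[OF C(1)] by auto
  have u_nonneg: "0 \<le> u i k" for i k
    unfolding u_def using X Ci(1) by (simp add: nonneg_summable_fpsD)
  have rows: "summable (u i)" for i
    unfolding u_def using nonneg_summable_fpsD(2)[OF Ci(1)] by (rule summable_mult)
  have row_sums: "suminf (u i) = fps_nth X i * fps_mass C ^ i" for i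
  proof -
    have "suminf (u i) = fps_nth X i * fps_mass (C ^ i)"
      unfolding u_def fps_mass_def by (rule suminf_mult[OF nonneg_summable_fpsD(2)[OF Ci(1)]])
    then show ?thesis by (simp add: Ci(2))
  qed
  have row_sums_le: "fps_nth X i * fps_mass C ^ i \<le> fps_nth X i" for i
    using nonneg_summable_fpsD(1)[OF X] fps_mass_nonneg[OF C(1)] C(2)
    by (simp add: mult_left_le power_le_one)
  have "summable (\<lambda>i. fps_nth X i * fps_mass C ^ i)"
    using nonneg_summable_fpsD[OF X] fps_mass_nonneg[OF C(1)] row_sums_le
    by (intro summable_comparison_test'[where N = 0, OF nonneg_summable_fpsD(2)[OF X]]) simp
  then have outer: "summable (\<lambda>i. suminf (u i))"
    by (simp add: row_sums)
  note swap = suminf_swap_nonneg[OF u_nonneg rows outer]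
  have coeff: "fps_nth (fps_comp_gen X C) k = (\<Sum>i. u i k)" for k
    by (simp add: fps_comp_gen_nth u_def)
  show "nonneg_summable_fps (fps_comp_gen X C)"
    unfolding nonneg_summable_fps_def coeff using swap(1,2) u_nonneg
    by (auto intro: suminf_nonneg)
  have "fps_mass (fps_comp_gen X C) = (\<Sum>i. fps_nth X i * fps_mass C ^ i)"
    unfolding fps_mass_def coeff swap(3) row_sums ..
  also have "\<dots> \<le> fps_mass X"
    unfolding fps_mass_def[of X] using \<open>summable (\<lambda>i. fps_nth X i * fps_mass C ^ i)\<close>
    by (intro suminf_le row_sums_le nonneg_summable_fpsD(2)[OF X])
  finally show "fps_mass (fps_comp_gen X C) \<le> fps_mass X" .
qed

lemma fps_comp_gen_one: "fps_comp_gen 1 C = 1"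
proof (rule fps_ext)
  fix k
  have "(\<Sum>i. fps_nth (1 :: real fps) i * fps_nth (C ^ i) k)
      = (\<Sum>i\<in>{0}. fps_nth (1 :: real fps) i * fps_nth (C ^ i) k)"
    by (rule suminf_finite) auto
  then show "fps_nth (fps_comp_gen 1 C) k = fps_nth 1 k"
    by (simp add: fps_comp_gen_nth)
qed

lemma fps_nth_fps_comp_gen_mult:
  assumes X: "nonneg_summable_fps X" and Y: "nonneg_summable_fps Y"
    and C: "nonneg_summable_fps C" "fps_mass C \<le> 1"
  shows "fps_nth (fps_comp_gen (X * Y) C) k
       = (\<Sum>a. \<Sum>b. fps_nth X a * fps_nth Y b * fps_nth (C ^ (a + b)) k)"
proof -
  define V where "V a b = fps_nth X a * fps_nth Y b * fps_nth (C ^ (a + b)) k" for a b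
  have X0: "0 \<le> fps_nth X a" and Y0: "0 \<le> fps_nth Y a" for a
    using X Y by (simp_all add: nonneg_summable_fpsD)
  have V_nonneg: "0 \<le> V a b" for a b
    unfolding V_def
    using X0 Y0 fps_nth_power_nonneg[OF C(1)] by simp
  have V_le: "V a b \<le> fps_nth X a * fps_nth Y b" for a b
    unfolding V_def using X0 Y0 fps_nth_power_le_one[OF C] by (simp add: mult_left_le)
  have XY_rows: "summable (\<lambda>b. fps_nth X a * fps_nth Y b)" for a
    by (rule summable_mult[OF nonneg_summable_fpsD(2)[OF Y]])
  have rows: "summable (V a)" for a
    by (rule summable_comparison_test'[where N = 0, OF XY_rows[of a]]) (simp add: V_nonneg V_le)
  have row_sums_le: "suminf (V a) \<le> fps_nth X a * fps_mass Y" for a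
  proof -
    have "suminf (V a) \<le> (\<Sum>b. fps_nth X a * fps_nth Y b)"
      by (rule suminf_le[OF V_le rows XY_rows])
    also have "\<dots> = fps_nth X a * fps_mass Y"
      unfolding fps_mass_def by (rule suminf_mult[OF nonneg_summable_fpsD(2)[OF Y]])
    finally show ?thesis .
  qed
  have outer: "summable (\<lambda>a. suminf (V a))"
    by (rule summable_comparison_test'[where N = 0,
          OF summable_mult2[OF nonneg_summable_fpsD(2)[OF X]]])
       (use row_sums_le suminf_nonneg[OF rows V_nonneg] in simp)
  have "((\<lambda>(a, b). V a b) has_sum (\<Sum>a. suminf (V a))) UNIV"
    by (rule has_sum_nonneg_iterated_suminf[OF V_nonneg rows outer])
  from has_sum_antidiagonal[OF this]
  have diagonals: "(\<lambda>m. \<Sum>a\<le>m. V a (m - a)) sums (\<Sum>a. suminf (V a))"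
    by (intro has_sum_imp_sums) (simp only: prod.case)
  have "(\<Sum>a\<le>m. V a (m - a)) = fps_nth (X * Y) m * fps_nth (C ^ m) k" for m
    by (simp add: V_def fps_mult_nth atLeast0AtMost sum_distrib_right)
  then have "fps_nth (fps_comp_gen (X * Y) C) k = (\<Sum>m. \<Sum>a\<le>m. V a (m - a))"
    by (simp add: fps_comp_gen_nth)
  also have "\<dots> = (\<Sum>a. \<Sum>b. V a b)"
    using diagonals by (simp add: sums_iff)
  finally show ?thesis
    by (simp add: V_def)
qed

lemma fps_nth_mult_fps_comp_gen:
  assumes X: "nonneg_summable_fps X" and Y: "nonneg_summable_fps Y"
    and C: "nonneg_summable_fps C" "fps_mass C \<le> 1"
  shows "fps_nth (fps_comp_gen X C * fps_comp_gen Y C) k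
       = (\<Sum>a. \<Sum>b. fps_nth X a * fps_nth Y b * fps_nth (C ^ (a + b)) k)"
proof -
  define w where "w a l = fps_nth (C ^ a) l" for a l
  have sX: "summable (\<lambda>a. fps_nth X a * w a l)"
    and sY: "summable (\<lambda>b. fps_nth Y b * w b l)" for l
    using summable_fps_comp_gen_terms[OF X C] summable_fps_comp_gen_terms[OF Y C]
    by (simp_all add: w_def)
  have "fps_nth (fps_comp_gen X C * fps_comp_gen Y C) k
      = (\<Sum>l\<le>k. (\<Sum>a. fps_nth X a * w a l) * (\<Sum>b. fps_nth Y b * w b (k - l)))"
    by (simp add: fps_mult_nth atLeast0AtMost fps_comp_gen_nth w_def)
  also have "\<dots> = (\<Sum>l\<le>k. \<Sum>a. fps_nth X a * w a l * (\<Sum>b. fps_nth Y b * w b (k - l)))"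
    by (intro sum.cong refl suminf_mult2 sX)
  also have "\<dots> = (\<Sum>a. \<Sum>l\<le>k. fps_nth X a * w a l * (\<Sum>b. fps_nth Y b * w b (k - l)))"
    by (intro suminf_sum[symmetric] summable_mult2 sX)
  also have "\<dots> = (\<Sum>a. \<Sum>l\<le>k. \<Sum>b. fps_nth X a * w a l * (fps_nth Y b * w b (k - l)))"
    by (intro suminf_cong sum.cong refl suminf_mult[symmetric] sY)
  also have "\<dots> = (\<Sum>a. \<Sum>b. \<Sum>l\<le>k. fps_nth X a * w a l * (fps_nth Y b * w b (k - l)))"
    by (intro suminf_cong suminf_sum[symmetric] summable_mult sY)
  also have "\<dots> = (\<Sum>a. \<Sum>b. fps_nth X a * fps_nth Y b * fps_nth (C ^ (a + b)) k)"
    by (simp add: w_def power_add fps_mult_nth atLeast0AtMost sum_distrib_left mult_ac)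
  finally show ?thesis .
qed

lemma fps_comp_gen_mult:
  assumes "nonneg_summable_fps X" "nonneg_summable_fps Y"
    and "nonneg_summable_fps C" "fps_mass C \<le> 1"
  shows "fps_comp_gen (X * Y) C = fps_comp_gen X C * fps_comp_gen Y C"
  by (rule fps_ext) (simp only: fps_nth_fps_comp_gen_mult[OF assms] fps_nth_mult_fps_comp_gen[OF assms])

lemma fps_comp_gen_power:
  assumes X: "nonneg_summable_fps X" and C: "nonneg_summable_fps C" "fps_mass C \<le> 1"
  shows "fps_comp_gen (X ^ n) C = fps_comp_gen X C ^ n"
proof (induction n)
  case 0
  then show ?case by (simp add: fps_comp_gen_one)
next
  case (Suc n)
  then show ?case
    by (simp add: fps_comp_gen_mult[OF X nonneg_summable_fps_power(1)[OF X] C])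
qed

lemma fps_comp_gen_assoc:
  assumes A: "nonneg_summable_fps A" and B: "nonneg_summable_fps B" "fps_mass B \<le> 1"
    and C: "nonneg_summable_fps C" "fps_mass C \<le> 1"
  shows "fps_comp_gen (fps_comp_gen A B) C = fps_comp_gen A (fps_comp_gen B C)"
proof (rule fps_ext)
  fix k
  have BC: "nonneg_summable_fps (fps_comp_gen B C)" "fps_mass (fps_comp_gen B C) \<le> 1"
    using nonneg_summable_fps_comp_gen[OF B(1) C] B(2) by auto
  have Bi: "nonneg_summable_fps (B ^ i)" for i
    using nonneg_summable_fps_power(1)[OF B(1)] .
  define u where "u i j = fps_nth A i * fps_nth (B ^ i) j * fps_nth (C ^ j) k" for i j
  have u_nonneg: "0 \<le> u i j" for i j
    unfolding u_def using A Bi fps_nth_power_nonneg[OF C(1)]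
    by (simp add: nonneg_summable_fpsD)
  have row_sums: "suminf (u i) = fps_nth A i * fps_nth (fps_comp_gen B C ^ i) k"
    and rows: "summable (u i)" for i
  proof -
    have "(\<lambda>j. fps_nth (B ^ i) j * fps_nth (C ^ j) k) sums fps_nth (fps_comp_gen (B ^ i) C) k"
      unfolding fps_comp_gen_nth by (rule summable_sums[OF summable_fps_comp_gen_terms[OF Bi C]])
    from sums_mult[OF this, of "fps_nth A i"]
    have "u i sums (fps_nth A i * fps_nth (fps_comp_gen B C ^ i) k)"
      by (simp add: u_def[abs_def] mult.assoc fps_comp_gen_power[OF B(1) C])
    then show "suminf (u i) = fps_nth A i * fps_nth (fps_comp_gen B C ^ i) k" "summable (u i)"
      by (simp_all add: sums_iff)
  qed
  have outer: "summable (\<lambda>i. suminf (u i))"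
    unfolding row_sums by (rule summable_fps_comp_gen_terms[OF A BC])
  have "fps_nth (fps_comp_gen (fps_comp_gen A B) C) k
      = (\<Sum>j. (\<Sum>i. fps_nth A i * fps_nth (B ^ i) j) * fps_nth (C ^ j) k)"
    by (simp add: fps_comp_gen_nth)
  also have "\<dots> = (\<Sum>j. \<Sum>i. u i j)"
    by (simp add: u_def suminf_mult2[OF summable_fps_comp_gen_terms[OF A B]])
  also have "\<dots> = (\<Sum>i. suminf (u i))"
    by (rule suminf_swap_nonneg(3)[OF u_nonneg rows outer])
  also have "\<dots> = fps_nth (fps_comp_gen A (fps_comp_gen B C)) k"
    by (simp add: row_sums fps_comp_gen_nth)
  finally show "fps_nth (fps_comp_gen (fps_comp_gen A B) C) k
      = fps_nth (fps_comp_gen A (fps_comp_gen B C)) k" .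
qed

section \<open>Iterates and their majorant\<close>

lemma nonneg_summable_fps_p_iter:
  assumes P: "nonneg_summable_fps P" "fps_mass P \<le> 1"
  shows "nonneg_summable_fps (p_iter P (Suc n))" "fps_mass (p_iter P (Suc n)) \<le> 1"
proof -
  have "nonneg_summable_fps (p_iter P (Suc n)) \<and> fps_mass (p_iter P (Suc n)) \<le> 1"
  proof (induction n)
    case 0
    then show ?case using P by simp
  next
    case (Suc n)
    then show ?case
      using nonneg_summable_fps_comp_gen[OF P(1)] P(2) by fastforce
  qed
  then show "nonneg_summable_fps (p_iter P (Suc n))" "fps_mass (p_iter P (Suc n)) \<le> 1"
    by auto
qed

lemma p_iter_Suc_Suc_right:
  assumes P: "nonneg_summable_fps P" "fps_mass P \<le> 1"
  shows "p_iter P (Suc (Suc n)) = fps_comp_gen (p_iter P (Suc n)) P"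
proof (induction n)
  case 0
  then show ?case by simp
next
  case (Suc n)
  have "p_iter P (Suc (Suc (Suc n))) = fps_comp_gen P (fps_comp_gen (p_iter P (Suc n)) P)"
    using Suc by simp
  also have "\<dots> = fps_comp_gen (fps_comp_gen P (p_iter P (Suc n))) P"
    using fps_comp_gen_assoc[OF P(1) nonneg_summable_fps_p_iter[OF P] P] by simp
  finally show ?case by simp
qed

lemma p_iter_Suc_Suc_nth:
  assumes "nonneg_summable_fps P" "fps_mass P \<le> 1"
  shows "fps_nth (p_iter P (Suc (Suc n))) k = (\<Sum>i. fps_nth (p_iter P (Suc n)) i * fps_nth (P ^ i) k)"
  by (simp only: p_iter_Suc_Suc_right[OF assms] fps_comp_gen_nth)

lemma p_iter_nth_bounds:
  assumes "nonneg_summable_fps P" "fps_mass P \<le> 1"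
  shows "0 \<le> fps_nth (p_iter P (Suc n)) k" "fps_nth (p_iter P (Suc n)) k \<le> 1"
  using nonneg_summable_fps_p_iter[OF assms] fps_nth_le_fps_mass[of "p_iter P (Suc n)" k]
  by (auto simp: nonneg_summable_fpsD intro: order.trans)

definition fps_abs :: "real fps \<Rightarrow> real fps" where
  "fps_abs p = Abs_fps (\<lambda>i. \<bar>fps_nth p i\<bar>)"

lemma fps_nth_fps_abs [simp]: "fps_nth (fps_abs p) i = \<bar>fps_nth p i\<bar>"
  by (simp add: fps_abs_def)

lemma nonneg_summable_fps_abs:
  assumes "summable (\<lambda>i. \<bar>fps_nth p i\<bar>)"
  shows "nonneg_summable_fps (fps_abs p)" "fps_mass (fps_abs p) = (\<Sum>i. \<bar>fps_nth p i\<bar>)"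
proof -
  have "fps_nth (fps_abs p) = (\<lambda>i. \<bar>fps_nth p i\<bar>)"
    by auto
  then show "nonneg_summable_fps (fps_abs p)" "fps_mass (fps_abs p) = (\<Sum>i. \<bar>fps_nth p i\<bar>)"
    using assms by (simp_all add: nonneg_summable_fps_def fps_mass_def)
qed

lemma abs_fps_nth_power_le:
  fixes f F :: "real fps"
  assumes "\<And>k. \<bar>fps_nth f k\<bar> \<le> fps_nth F k"
  shows "\<bar>fps_nth (f ^ n) k\<bar> \<le> fps_nth (F ^ n) k"
proof (induction n arbitrary: k)
  case 0
  then show ?case by simp
next
  case (Suc n)
  have "\<bar>fps_nth (f ^ Suc n) k\<bar> = \<bar>\<Sum>l\<le>k. fps_nth f l * fps_nth (f ^ n) (k - l)\<bar>"
    by (simp add: fps_mult_nth atLeast0AtMost)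
  also have "\<dots> \<le> (\<Sum>l\<le>k. \<bar>fps_nth f l\<bar> * \<bar>fps_nth (f ^ n) (k - l)\<bar>)"
    unfolding abs_mult[symmetric] by (rule sum_abs)
  also have "\<dots> \<le> (\<Sum>l\<le>k. fps_nth F l * fps_nth (F ^ n) (k - l))"
  proof (rule sum_mono, rule mult_mono)
    show "0 \<le> fps_nth F l" for l
      using order.trans[OF abs_ge_zero assms] .
  qed (simp_all add: assms Suc.IH)
  also have "\<dots> = fps_nth (F ^ Suc n) k"
    by (simp add: fps_mult_nth atLeast0AtMost)
  finally show ?case .
qed

lemma abs_fps_nth_fps_comp_gen_le:
  assumes p: "summable (\<lambda>i. \<bar>fps_nth p i\<bar>)"
    and F: "nonneg_summable_fps F" "fps_mass F \<le> 1" and f: "\<And>k. \<bar>fps_nth f k\<bar> \<le> fps_nth F k"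
  shows "\<bar>fps_nth (fps_comp_gen p f) k\<bar> \<le> fps_nth (fps_comp_gen (fps_abs p) F) k"
proof -
  have major: "summable (\<lambda>i. \<bar>fps_nth p i\<bar> * fps_nth (F ^ i) k)"
    using summable_fps_comp_gen_terms[OF nonneg_summable_fps_abs(1)[OF p] F] by simp
  have le: "\<bar>fps_nth p i * fps_nth (f ^ i) k\<bar> \<le> \<bar>fps_nth p i\<bar> * fps_nth (F ^ i) k" for i
    by (simp add: abs_mult mult_left_mono abs_fps_nth_power_le[OF f])
  have summable: "summable (\<lambda>i. \<bar>fps_nth p i * fps_nth (f ^ i) k\<bar>)"
    by (rule summable_comparison_test'[where N = 0, OF major]) (simp add: le)
  have "\<bar>fps_nth (fps_comp_gen p f) k\<bar> \<le> (\<Sum>i. \<bar>fps_nth p i * fps_nth (f ^ i) k\<bar>)"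
    unfolding fps_comp_gen_nth by (rule summable_rabs[OF summable])
  also have "\<dots> \<le> (\<Sum>i. \<bar>fps_nth p i\<bar> * fps_nth (F ^ i) k)"
    by (rule suminf_le[OF le summable major])
  finally show ?thesis
    by (simp add: fps_comp_gen_nth)
qed

lemma abs_fps_nth_p_iter_le:
  assumes "summable (\<lambda>i. \<bar>fps_nth p i\<bar>)" "(\<Sum>i. \<bar>fps_nth p i\<bar>) \<le> 1"
  shows "\<bar>fps_nth (p_iter p (Suc n)) k\<bar> \<le> fps_nth (p_iter (fps_abs p) (Suc n)) k"
proof (induction n arbitrary: k)
  case 0
  then show ?case by simp
next
  case (Suc n)
  have "nonneg_summable_fps (fps_abs p)" "fps_mass (fps_abs p) \<le> 1"
    using nonneg_summable_fps_abs[OF assms(1)] assms(2) by auto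
  from abs_fps_nth_fps_comp_gen_le[OF assms(1) nonneg_summable_fps_p_iter[OF this] Suc.IH]
  show ?case by simp
qed

section \<open>Coefficients of high powers are uniformly small\<close>

lemma binomial_middle_Suc_le: "Suc N choose (Suc N div 2) \<le> 2 * (N choose (N div 2))"
proof (cases "Suc N div 2")
  case 0
  then show ?thesis by simp
next
  case (Suc k)
  then have "Suc N choose (Suc N div 2) = (N choose k) + (N choose Suc k)"
    by simp
  also have "\<dots> \<le> (N choose (N div 2)) + (N choose (N div 2))"
    by (intro add_mono binomial_maximum)
  finally show ?thesis by simp
qed

lemma central_binomial_Suc: "Suc m * (2 * Suc m choose Suc m) = 2 * (2 * m + 1) * (2 * m choose m)"
proof -
  have "Suc m * (2 * Suc m choose Suc m) = Suc m * (Suc (Suc (2 * m)) choose Suc m)"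
    by simp
  also have "\<dots> = Suc (Suc (2 * m)) * (Suc (2 * m) choose m)"
    by (rule Suc_times_binomial)
  also have "Suc (2 * m) choose m = Suc (2 * m) choose Suc m"
    using binomial_symmetric[of m "Suc (2 * m)"] by (simp del: binomial_Suc_Suc)
  also have "Suc (Suc (2 * m)) * (Suc (2 * m) choose Suc m) = 2 * (Suc m * (Suc (2 * m) choose Suc m))"
    by simp
  also have "Suc m * (Suc (2 * m) choose Suc m) = Suc (2 * m) * (2 * m choose m)"
    by (rule Suc_times_binomial)
  finally show ?thesis by simp
qed

lemma central_binomial_sq_le: "(real (2 * m choose m) / 4 ^ m)\<^sup>2 \<le> 1 / (2 * real m + 1)"
proof (induction m)
  case 0
  then show ?case by simp
next
  case (Suc m)
  define c where "c = real (2 * m choose m)"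
  define c' where "c' = real (2 * Suc m choose Suc m)"
  have "(real m + 1) * c' = 2 * (2 * real m + 1) * c"
    unfolding c_def c'_def using arg_cong[OF central_binomial_Suc[of m], of real]
    by (simp add: algebra_simps)
  then have c'_eq: "c' = 2 * (2 * real m + 1) * c / (real m + 1)"
    by (simp add: field_simps add_pos_pos)
  have "c' / 4 ^ Suc m = c / 4 ^ m * ((2 * real m + 1) / (2 * real m + 2))"
    unfolding c'_eq by (simp add: field_split_simps)
  then have "(c' / 4 ^ Suc m)\<^sup>2 = (c / 4 ^ m)\<^sup>2 * ((2 * real m + 1) / (2 * real m + 2))\<^sup>2"
    by (simp only: power_mult_distrib)
  also have "\<dots> \<le> 1 / (2 * real m + 1) * ((2 * real m + 1) / (2 * real m + 2))\<^sup>2"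
    using Suc.IH unfolding c_def by (rule mult_right_mono) simp
  also have "\<dots> = (2 * real m + 1) / (2 * real m + 2)\<^sup>2"
    by (simp add: power2_eq_square)
  also have "\<dots> \<le> 1 / (2 * real (Suc m) + 1)"
  proof -
    have "(2 * real m + 1) * (2 * real (Suc m) + 1) \<le> (2 * real m + 2)\<^sup>2"
      by (simp add: power2_eq_square algebra_simps)
    then show ?thesis
      by (simp add: divide_simps)
  qed
  finally show ?case
    by (simp only: c'_def)
qed

lemma binomial_middle_over_power_tendsto_zero:
  "(\<lambda>N. real (N choose (N div 2)) / 2 ^ N) \<longlonglongrightarrow> 0"
proof -
  define \<beta> where "\<beta> = (\<lambda>N. real (N choose (N div 2)) / 2 ^ N)"
  have "real (Suc N choose (Suc N div 2)) \<le> 2 * real (N choose (N div 2))" for N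
    by (metis binomial_middle_Suc_le of_nat_le_iff of_nat_mult of_nat_numeral)
  then have "decseq \<beta>"
    by (intro decseq_SucI) (simp add: \<beta>_def field_simps)
  then obtain L where L: "\<beta> \<longlonglongrightarrow> L"
    by (rule decseq_convergent[where B = 0]) (simp add: \<beta>_def)
  have "(\<lambda>m. \<beta> (2 * m)) \<longlonglongrightarrow> 0"
  proof (rule tendsto_sandwich[where f = "\<lambda>_. 0" and h = "\<lambda>m. sqrt (1 / (2 * real m + 1))"])
    show "\<forall>\<^sub>F m in sequentially. \<beta> (2 * m) \<le> sqrt (1 / (2 * real m + 1))"
      using central_binomial_sq_le by (intro always_eventually allI real_le_rsqrt)
        (simp add: \<beta>_def power_mult)
    show "(\<lambda>m. sqrt (1 / (2 * real m + 1))) \<longlonglongrightarrow> 0"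
      by real_asymp
  qed (simp_all add: \<beta>_def)
  moreover have "(\<lambda>m. \<beta> (2 * m)) \<longlonglongrightarrow> L"
    using LIMSEQ_subseq_LIMSEQ[OF L, of "\<lambda>m. 2 * m"] by (simp add: strict_mono_def o_def)
  ultimately have "L = 0"
    using LIMSEQ_unique by blast
  with L show ?thesis
    unfolding \<beta>_def by simp
qed

lemma binomial_term_tendsto_zero:
  fixes a :: real
  assumes "0 < a" "a < 1"
  shows "(\<lambda>j. real (j choose N) * a ^ N * (1 - a) ^ (j - N)) \<longlonglongrightarrow> 0"
proof (rule tendsto_sandwich[where f = "\<lambda>_. 0" and h = "\<lambda>j. real j ^ N * (1 - a) ^ j / (1 - a) ^ N"])
  show "\<forall>\<^sub>F j in sequentially. real (j choose N) * a ^ N * (1 - a) ^ (j - N)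
      \<le> real j ^ N * (1 - a) ^ j / (1 - a) ^ N"
  proof (rule eventually_sequentiallyI[of N])
    fix j assume "N \<le> j"
    have "real (j choose N) \<le> real j ^ N"
      using binomial_le_pow[OF \<open>N \<le> j\<close>] by (metis of_nat_le_iff of_nat_power)
    moreover have "a ^ N \<le> 1"
      using assms by (simp add: power_le_one)
    ultimately have "real (j choose N) * a ^ N \<le> real j ^ N"
      using mult_mono[of "real (j choose N)" "real j ^ N" "a ^ N" 1] assms by simp
    then have "real (j choose N) * a ^ N * (1 - a) ^ (j - N) \<le> real j ^ N * (1 - a) ^ (j - N)"
      using assms by (intro mult_right_mono) simp_all
    moreover have "(1 - a) ^ (j - N) = (1 - a) ^ j / (1 - a) ^ N"
      using \<open>N \<le> j\<close> assms by (simp add: power_diff)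
    ultimately show "real (j choose N) * a ^ N * (1 - a) ^ (j - N) \<le> real j ^ N * (1 - a) ^ j / (1 - a) ^ N"
      by simp
  qed
  show "(\<lambda>j. real j ^ N * (1 - a) ^ j / (1 - a) ^ N) \<longlonglongrightarrow> 0"
    using assms by real_asymp
qed (use assms in simp_all)

lemma binomial_average_abs_le:
  fixes a B e :: real and \<beta> :: "nat \<Rightarrow> real"
  assumes a: "0 \<le> a" "a \<le> 1" and B: "\<And>N. \<bar>\<beta> N\<bar> \<le> B" and K: "\<And>N. K \<le> N \<Longrightarrow> \<bar>\<beta> N\<bar> \<le> e"
  shows "\<bar>\<Sum>N\<le>j. real (j choose N) * a ^ N * (1 - a) ^ (j - N) * \<beta> N\<bar>
    \<le> B * (\<Sum>N<K. real (j choose N) * a ^ N * (1 - a) ^ (j - N)) + e"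
proof -
  define w where "w N = real (j choose N) * a ^ N * (1 - a) ^ (j - N)" for N
  have w_nonneg: "0 \<le> w N" for N
    unfolding w_def using a by simp
  have w_sum: "(\<Sum>N\<le>j. w N) = 1"
    using binomial_ring[of a "1 - a" j] by (simp add: w_def)
  have "0 \<le> e" "0 \<le> B"
    using K[of K] B[of K] by auto
  have "\<bar>\<Sum>N\<le>j. w N * \<beta> N\<bar> \<le> (\<Sum>N\<le>j. w N * \<bar>\<beta> N\<bar>)"
    using sum_abs[of "\<lambda>N. w N * \<beta> N"] by (simp add: abs_mult w_nonneg)
  also have "\<dots> \<le> (\<Sum>N\<le>j. (if N \<in> {..<K} then w N * B else 0) + e * w N)"
  proof (rule sum_mono)
    fix N
    show "w N * \<bar>\<beta> N\<bar> \<le> (if N \<in> {..<K} then w N * B else 0) + e * w N"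
    proof (cases "N < K")
      case True
      have "w N * \<bar>\<beta> N\<bar> \<le> w N * B"
        using B[of N] w_nonneg[of N] by (simp add: mult_left_mono)
      moreover have "0 \<le> e * w N"
        using w_nonneg[of N] \<open>0 \<le> e\<close> by simp
      ultimately show ?thesis
        using True by simp
    next
      case False
      have "w N * \<bar>\<beta> N\<bar> \<le> w N * e"
        using K[of N] False w_nonneg[of N] by (intro mult_left_mono) auto
      then show ?thesis
        using False by (simp add: mult.commute)
    qed
  qed
  also have "\<dots> = (\<Sum>N\<in>{..j} \<inter> {..<K}. w N * B) + e"
  proof -
    have "(\<Sum>N\<le>j. e * w N) = e"
      by (simp only: sum_distrib_left[symmetric] w_sum mult_1_right)
    then show ?thesis
      by (simp only: sum.distrib sum.inter_restrict finite_atMost)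
  qed
  also have "\<dots> \<le> (\<Sum>N<K. w N * B) + e"
    using \<open>0 \<le> B\<close> w_nonneg by (intro add_right_mono sum_mono2) auto
  finally show ?thesis
    by (simp add: w_def sum_distrib_left mult_ac)
qed

lemma binomial_average_tendsto_zero:
  fixes a :: real and \<beta> :: "nat \<Rightarrow> real"
  assumes a: "0 < a" "a < 1" and \<beta>: "\<beta> \<longlonglongrightarrow> 0"
  shows "(\<lambda>j. \<Sum>N\<le>j. real (j choose N) * a ^ N * (1 - a) ^ (j - N) * \<beta> N) \<longlonglongrightarrow> 0"
proof (rule LIMSEQ_I)
  fix e :: real assume "0 < e"
  obtain B where B: "\<And>N. norm (\<beta> N) \<le> B"
    using BseqE[OF convergent_imp_Bseq[OF convergentI[OF \<beta>]]] by blast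
  obtain K where K: "\<And>N. K \<le> N \<Longrightarrow> norm (\<beta> N) < e / 2"
    using LIMSEQ_D[OF \<beta>, of "e / 2"] \<open>0 < e\<close> by auto
  have "(\<lambda>j. B * (\<Sum>N<K. real (j choose N) * a ^ N * (1 - a) ^ (j - N))) \<longlonglongrightarrow> B * 0"
    by (intro tendsto_mult tendsto_const tendsto_null_sum binomial_term_tendsto_zero a)
  then have "\<forall>\<^sub>F j in sequentially. B * (\<Sum>N<K. real (j choose N) * a ^ N * (1 - a) ^ (j - N)) < e / 2"
    using \<open>0 < e\<close> by (intro order_tendstoD(2)) auto
  then obtain J where J: "\<And>j. J \<le> j \<Longrightarrow> B * (\<Sum>N<K. real (j choose N) * a ^ N * (1 - a) ^ (j - N)) < e / 2"
    by (auto simp: eventually_sequentially)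
  have "norm ((\<Sum>N\<le>j. real (j choose N) * a ^ N * (1 - a) ^ (j - N) * \<beta> N) - 0) < e" if "J \<le> j" for j
    using binomial_average_abs_le[of a \<beta> B K "e / 2" j] a B K J[OF that] by (simp add: less_imp_le)
  then show "\<exists>J. \<forall>j\<ge>J. norm ((\<Sum>N\<le>j. real (j choose N) * a ^ N * (1 - a) ^ (j - N) * \<beta> N) - 0) < e"
    by blast
qed

lemma fps_nth_two_point_power_le:
  assumes "s \<noteq> t"
  shows "fps_nth ((fps_X ^ s + fps_X ^ t) ^ N :: real fps) k \<le> real (N choose (N div 2))"
proof -
  define e where "e r = s * r + t * (N - r)" for r
  have e_inj: "r = r'" if "r \<le> N" "r' \<le> N" "e r = e r'" for r r'
  proof -
    have "int (s * r + t * (N - r)) = int (s * r' + t * (N - r'))"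
      using that(3) by (simp add: e_def)
    then have "int s * int r + int t * (int N - int r) = int s * int r' + int t * (int N - int r')"
      using that(1,2) by (simp add: of_nat_diff)
    then have "(int s - int t) * (int r - int r') = 0"
      by (simp add: algebra_simps)
    then show ?thesis
      using assms by simp
  qed
  have "(fps_X ^ s + fps_X ^ t) ^ N = (\<Sum>r\<le>N. of_nat (N choose r) * fps_X ^ e r :: real fps)"
    unfolding binomial_ring e_def by (simp add: power_mult[symmetric] power_add mult.assoc)
  then have "fps_nth ((fps_X ^ s + fps_X ^ t) ^ N :: real fps) k
      = (\<Sum>r\<le>N. if k = e r then real (N choose r) else 0)"
    by (simp add: fps_sum_nth if_distrib[of "(*) _"] cong: if_cong)
  also have "\<dots> = (\<Sum>r\<in>{r \<in> {..N}. k = e r}. real (N choose r))"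
    by (rule sum.inter_filter[symmetric]) simp
  also have "\<dots> \<le> real (N choose (N div 2))"
  proof (cases "\<exists>r\<le>N. k = e r")
    case True
    then obtain r where "r \<le> N" "k = e r" by blast
    then have "{r \<in> {..N}. k = e r} = {r}"
      using e_inj by blast
    then show ?thesis
      by (simp add: binomial_maximum)
  next
    case False
    then have "{r \<in> {..N}. k = e r} = {}"
      by auto
    then show ?thesis
      by (simp only: sum.empty of_nat_0_le_iff)
  qed
  finally show ?thesis .
qed

lemma nonneg_summable_fps_two_atoms:
  fixes d :: real
  assumes "0 \<le> d"
  shows "nonneg_summable_fps (fps_const d * (fps_X ^ s + fps_X ^ t))"
proof (rule nonneg_summable_fpsI)
  have "fps_nth (fps_const d * (fps_X ^ s + fps_X ^ t))
      = (\<lambda>i. (if i = s then d else 0) + (if i = t then d else 0))"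
    by (simp add: fun_eq_iff)
  then show "fps_nth (fps_const d * (fps_X ^ s + fps_X ^ t)) sums (d + d)"
    by (simp only:) (intro sums_add sums_single)
qed (use assms in simp)

lemma nonneg_summable_fps_diff_two_atoms:
  assumes P: "nonneg_summable_fps P" and "s \<noteq> t" "d \<le> fps_nth P s" "d \<le> fps_nth P t"
  shows "nonneg_summable_fps (P - fps_const d * (fps_X ^ s + fps_X ^ t))"
    and "fps_mass (P - fps_const d * (fps_X ^ s + fps_X ^ t)) = fps_mass P - 2 * d"
proof -
  have "fps_nth (P - fps_const d * (fps_X ^ s + fps_X ^ t))
      = (\<lambda>i. fps_nth P i - ((if i = s then d else 0) + (if i = t then d else 0)))"
    by (simp add: fun_eq_iff)
  moreover have "(\<lambda>i. fps_nth P i - ((if i = s then d else 0) + (if i = t then d else 0)))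
      sums (fps_mass P - (d + d))"
    unfolding fps_mass_def using nonneg_summable_fpsD(2)[OF P]
    by (intro sums_diff sums_add sums_single summable_sums)
  moreover have "0 \<le> fps_nth P i - ((if i = s then d else 0) + (if i = t then d else 0))" for i
    using assms nonneg_summable_fpsD(1)[OF P, of i] by auto
  ultimately show "nonneg_summable_fps (P - fps_const d * (fps_X ^ s + fps_X ^ t))"
    and "fps_mass (P - fps_const d * (fps_X ^ s + fps_X ^ t)) = fps_mass P - 2 * d"
    using nonneg_summable_fpsI[of "P - fps_const d * (fps_X ^ s + fps_X ^ t)"] by auto
qed

lemma fps_nth_power_le_binomial_average:
  assumes P: "nonneg_summable_fps P" "fps_mass P \<le> 1"
    and st: "s \<noteq> t" and d: "0 < d" "d \<le> fps_nth P s" "d \<le> fps_nth P t"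
  shows "fps_nth (P ^ j) k
    \<le> (\<Sum>N\<le>j. real (j choose N) * (2 * d) ^ N * (1 - 2 * d) ^ (j - N) * (real (N choose (N div 2)) / 2 ^ N))"
proof -
  define D :: "real fps" where "D = fps_const d * (fps_X ^ s + fps_X ^ t)"
  define R where "R = P - D"
  have D: "nonneg_summable_fps D"
    unfolding D_def using d(1) by (intro nonneg_summable_fps_two_atoms) simp
  have R: "nonneg_summable_fps R" "fps_mass R \<le> 1 - 2 * d"
    using nonneg_summable_fps_diff_two_atoms[OF P(1) st d(2,3)] P(2) by (simp_all add: R_def D_def)
  have D_power_nth: "fps_nth (D ^ N) i \<le> d ^ N * real (N choose (N div 2))" for N i
  proof -
    have "fps_nth (D ^ N) i = d ^ N * fps_nth ((fps_X ^ s + fps_X ^ t) ^ N) i"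
      by (simp add: D_def power_mult_distrib fps_const_power)
    also have "\<dots> \<le> d ^ N * real (N choose (N div 2))"
      using fps_nth_two_point_power_le[OF st] d(1) by (intro mult_left_mono) auto
    finally show ?thesis .
  qed
  have "P ^ j = (\<Sum>N\<le>j. of_nat (j choose N) * D ^ N * R ^ (j - N))"
    using binomial_ring[of D R j] by (simp add: R_def)
  then have "fps_nth (P ^ j) k = (\<Sum>N\<le>j. real (j choose N) * fps_nth (D ^ N * R ^ (j - N)) k)"
    by (simp add: fps_sum_nth mult.assoc fps_of_nat[symmetric])
  also have "\<dots> \<le> (\<Sum>N\<le>j. real (j choose N) * (d ^ N * real (N choose (N div 2)) * (1 - 2 * d) ^ (j - N)))"
  proof (intro sum_mono mult_left_mono order.trans[OF fps_nth_mult_le])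
    fix N
    show "nonneg_summable_fps (D ^ N)" "nonneg_summable_fps (R ^ (j - N))"
      using nonneg_summable_fps_power D R(1) by auto
    show "fps_nth (D ^ N) i \<le> d ^ N * real (N choose (N div 2))" for i
      by (rule D_power_nth)
    show "d ^ N * real (N choose (N div 2)) * fps_mass (R ^ (j - N))
        \<le> d ^ N * real (N choose (N div 2)) * (1 - 2 * d) ^ (j - N)"
      using d(1) R fps_mass_nonneg[OF R(1)]
      by (auto simp: nonneg_summable_fps_power(2) intro!: mult_left_mono power_mono)
  qed simp
  also have "\<dots> = (\<Sum>N\<le>j. real (j choose N) * (2 * d) ^ N * (1 - 2 * d) ^ (j - N) * (real (N choose (N div 2)) / 2 ^ N))"
    by (simp add: power_mult_distrib mult_ac)
  finally show ?thesis .
qed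

lemma fps_mass_less_one_single_support:
  assumes "nonneg_summable_fps P" "\<And>i. fps_nth P i < 1" "\<And>i. i \<noteq> m \<Longrightarrow> fps_nth P i = 0"
  shows "fps_mass P < 1"
proof -
  have "fps_nth P = (\<lambda>i. if i = m then fps_nth P i else 0)"
    using assms(3) by auto
  then have "fps_nth P sums fps_nth P m"
    by (metis sums_single)
  then show ?thesis
    using assms(2) by (simp add: fps_mass_def sums_iff)
qed

lemma eventually_fps_nth_power_le:
  assumes P: "nonneg_summable_fps P" "fps_mass P \<le> 1" and lt: "\<And>i. fps_nth P i < 1" and "0 < e"
  shows "\<forall>\<^sub>F j in sequentially. \<forall>k. fps_nth (P ^ j) k \<le> e"
proof (cases "\<exists>s t. s \<noteq> t \<and> 0 < fps_nth P s \<and> 0 < fps_nth P t")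
  case True
  then obtain s t where st: "s \<noteq> t" "0 < fps_nth P s" "0 < fps_nth P t"
    by blast
  define d where "d = min (fps_nth P s) (fps_nth P t) / 2"
  have d: "0 < d" "d \<le> fps_nth P s" "d \<le> fps_nth P t"
    using st by (auto simp: d_def)
  have "fps_nth P s + fps_nth P t \<le> fps_mass P"
    unfolding fps_mass_def using st(1) sum_le_suminf[of "fps_nth P" "{s, t}"] P(1)
    by (simp add: nonneg_summable_fpsD)
  then have "2 * d < 1"
    using P(2) lt[of s] by (simp add: d_def min_def)
  then have "(\<lambda>j. \<Sum>N\<le>j. real (j choose N) * (2 * d) ^ N * (1 - 2 * d) ^ (j - N)
      * (real (N choose (N div 2)) / 2 ^ N)) \<longlonglongrightarrow> 0"
    using d(1) by (intro binomial_average_tendsto_zero binomial_middle_over_power_tendsto_zero) auto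
  from order_tendstoD(2)[OF this \<open>0 < e\<close>]
  show ?thesis
  proof eventually_elim
    case (elim j)
    then show ?case
      using fps_nth_power_le_binomial_average[OF P st(1) d, of j] by (auto intro: order.trans less_imp_le)
  qed
next
  case False
  obtain m where "\<And>i. i \<noteq> m \<Longrightarrow> fps_nth P i = 0"
    using False nonneg_summable_fpsD(1)[OF P(1)] by (metis less_eq_real_def)
  then have "fps_mass P < 1"
    using P(1) lt by (rule fps_mass_less_one_single_support[rotated 2])
  then have "(\<lambda>j. fps_mass P ^ j) \<longlonglongrightarrow> 0"
    using fps_mass_nonneg[OF P(1)] by (intro LIMSEQ_power_zero) simp
  from order_tendstoD(2)[OF this \<open>0 < e\<close>]
  show ?thesis
  proof eventually_elim
    case (elim j)
    then show ?case
      using fps_nth_le_fps_mass[OF nonneg_summable_fps_power(1)[OF P(1), of j]]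
        nonneg_summable_fps_power(2)[OF P(1), of j]
      by (auto intro: order.trans less_imp_le)
  qed
qed

section \<open>Decay of the coefficients of the iterates\<close>

lemma contraction_tendsto_zero:
  fixes y e :: "nat \<Rightarrow> real"
  assumes y: "\<And>n. 0 \<le> y n" and step: "\<And>n. y (Suc n) \<le> e n + r * y n"
    and e: "e \<longlonglongrightarrow> 0" and r: "0 \<le> r" "r < 1"
  shows "y \<longlonglongrightarrow> 0"
proof (rule LIMSEQ_I)
  fix \<epsilon> :: real assume "0 < \<epsilon>"
  have "\<forall>\<^sub>F n in sequentially. e n < \<epsilon> / 2 * (1 - r)"
    using \<open>0 < \<epsilon>\<close> r by (intro order_tendstoD(2)[OF e]) auto
  then obtain N where N: "\<And>n. N \<le> n \<Longrightarrow> e n < \<epsilon> / 2 * (1 - r)"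
    by (auto simp: eventually_sequentially)
  have bound: "y (N + m) \<le> \<epsilon> / 2 + r ^ m * y N" for m
  proof (induction m)
    case 0
    then show ?case using \<open>0 < \<epsilon>\<close> by simp
  next
    case (Suc m)
    have "y (N + Suc m) \<le> e (N + m) + r * y (N + m)"
      using step[of "N + m"] by simp
    also have "\<dots> \<le> \<epsilon> / 2 * (1 - r) + r * (\<epsilon> / 2 + r ^ m * y N)"
      using N[of "N + m"] Suc.IH r(1) by (intro add_mono mult_left_mono) auto
    also have "\<dots> = \<epsilon> / 2 + r ^ Suc m * y N"
      by (simp add: field_simps)
    finally show ?case .
  qed
  have "(\<lambda>m. r ^ m * y N) \<longlonglongrightarrow> 0 * y N"
    using r by (intro tendsto_mult LIMSEQ_power_zero tendsto_const) simp
  then have "\<forall>\<^sub>F m in sequentially. r ^ m * y N < \<epsilon> / 2"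
    using \<open>0 < \<epsilon>\<close> by (intro order_tendstoD(2)) auto
  then obtain M where M: "\<And>m. M \<le> m \<Longrightarrow> r ^ m * y N < \<epsilon> / 2"
    by (auto simp: eventually_sequentially)
  have "norm (y n - 0) < \<epsilon>" if "N + M \<le> n" for n
  proof -
    have "y n \<le> \<epsilon> / 2 + r ^ (n - N) * y N"
      using bound[of "n - N"] that by simp
    moreover have "r ^ (n - N) * y N < \<epsilon> / 2"
      using M that by simp
    ultimately show ?thesis
      using y[of n] by simp
  qed
  then show "\<exists>n0. \<forall>n\<ge>n0. norm (y n - 0) < \<epsilon>"
    by blast
qed

lemma fps_nth_fps_comp_gen_le:
  assumes X: "nonneg_summable_fps X" and C: "nonneg_summable_fps C" "fps_mass C \<le> 1"
    and small: "\<And>i k. J \<le> i \<Longrightarrow> fps_nth (C ^ i) k \<le> e" and "0 \<le> e" and "1 \<le> k"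
  shows "fps_nth (fps_comp_gen X C) k \<le> (\<Sum>i\<in>{1..<J}. fps_nth X i) + e * fps_mass X"
proof -
  define g where "g i = (if i \<in> {1..<J} then fps_nth X i else 0) + e * fps_nth X i" for i
  have g: "g sums ((\<Sum>i\<in>{1..<J}. fps_nth X i) + e * fps_mass X)"
    unfolding g_def fps_mass_def
    by (intro sums_add sums_If_finite_set sums_mult summable_sums nonneg_summable_fpsD(2)[OF X]) simp
  have X0: "0 \<le> fps_nth X i" for i
    using X by (rule nonneg_summable_fpsD)
  have "fps_nth X i * fps_nth (C ^ i) k \<le> g i" for i
  proof (cases "i = 0 \<or> J \<le> i")
    case True
    then have "fps_nth X i * fps_nth (C ^ i) k \<le> fps_nth X i * e"
      using \<open>1 \<le> k\<close> \<open>0 \<le> e\<close> X0[of i] small[of i k] by (auto intro: mult_left_mono)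
    then show ?thesis
      using True by (auto simp: g_def mult.commute)
  next
    case False
    then have "fps_nth X i * fps_nth (C ^ i) k \<le> fps_nth X i"
      using X0[of i] fps_nth_power_le_one[OF C] by (simp add: mult_left_le)
    moreover have "0 \<le> e * fps_nth X i"
      using X0[of i] \<open>0 \<le> e\<close> by simp
    ultimately show ?thesis
      using False by (simp add: g_def)
  qed
  then have "fps_nth (fps_comp_gen X C) k \<le> suminf g"
    unfolding fps_comp_gen_nth
    by (intro suminf_le summable_fps_comp_gen_terms[OF X C] sums_summable[OF g])
  then show ?thesis
    using g by (simp add: sums_iff)
qed

lemma fps_nth_fps_comp_gen_zero_ge:
  assumes X: "nonneg_summable_fps X" and C: "nonneg_summable_fps C" "fps_mass C \<le> 1" and "j \<noteq> 0"
  shows "fps_nth X 0 + fps_nth X j * fps_nth C 0 ^ j \<le> fps_nth (fps_comp_gen X C) 0"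
proof -
  have "fps_nth X 0 + fps_nth X j * fps_nth C 0 ^ j = (\<Sum>i\<in>{0, j}. fps_nth X i * fps_nth (C ^ i) 0)"
    using \<open>j \<noteq> 0\<close> by (simp add: fps_power_zeroth)
  also have "\<dots> \<le> (\<Sum>i. fps_nth X i * fps_nth (C ^ i) 0)"
    using summable_fps_comp_gen_terms[OF X C] nonneg_summable_fpsD(1)[OF X] fps_nth_power_nonneg[OF C(1)]
    by (intro sum_le_suminf) auto
  finally show ?thesis
    by (simp add: fps_comp_gen_nth)
qed

lemma fps_nth_fps_comp_gen_le_startsby_zero:
  assumes X: "nonneg_summable_fps X" and C: "nonneg_summable_fps C" "fps_mass C \<le> 1"
    and C0: "fps_nth C 0 = 0" and "1 \<le> j"
  shows "fps_nth (fps_comp_gen X C) j \<le> fps_nth C 1 ^ j * fps_nth X j + (\<Sum>i\<in>{1..<j}. fps_nth X i)"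
proof -
  have "fps_nth (fps_comp_gen X C) j = (\<Sum>i\<in>insert j {1..<j}. fps_nth X i * fps_nth (C ^ i) j)"
    unfolding fps_comp_gen_nth
  proof (rule suminf_finite)
    show "fps_nth X i * fps_nth (C ^ i) j = 0" if "i \<notin> insert j {1..<j}" for i
    proof (cases "i = 0")
      case True
      then show ?thesis using \<open>1 \<le> j\<close> by simp
    next
      case False
      then have "j < i"
        using that by auto
      then show ?thesis
        using startsby_zero_power_prefix[OF C0, of i] by simp
    qed
  qed simp
  also have "\<dots> = fps_nth C 1 ^ j * fps_nth X j + (\<Sum>i\<in>{1..<j}. fps_nth X i * fps_nth (C ^ i) j)"
    by (simp add: startsby_zero_power_nth_same[OF C0])
  also have "\<dots> \<le> fps_nth C 1 ^ j * fps_nth X j + (\<Sum>i\<in>{1..<j}. fps_nth X i)"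
    using nonneg_summable_fpsD(1)[OF X] fps_nth_power_le_one[OF C]
    by (intro add_left_mono sum_mono) (simp add: mult_left_le)
  finally show ?thesis .
qed

lemma p_iter_nth_tendsto_zero_const_pos:
  assumes P: "nonneg_summable_fps P" "fps_mass P \<le> 1" and "0 < fps_nth P 0" and "1 \<le> j"
  shows "(\<lambda>n. fps_nth (p_iter P (Suc n)) j) \<longlonglongrightarrow> 0"
proof -
  define c where "c n = p_iter P (Suc n)" for n
  define x where "x n = fps_nth (c n) 0" for n
  define a where "a = fps_nth P 0 ^ j"
  have "0 < a"
    using assms(3) by (simp add: a_def)
  have c_bounds: "0 \<le> fps_nth (c n) i" "fps_nth (c n) i \<le> 1" for n i
    unfolding c_def using p_iter_nth_bounds[OF P] by auto
  have step: "x n + fps_nth (c n) j * a \<le> x (Suc n)" for n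
    using fps_nth_fps_comp_gen_zero_ge[OF nonneg_summable_fps_p_iter(1)[OF P] P, of j n] \<open>1 \<le> j\<close>
    by (simp add: x_def c_def a_def p_iter_Suc_Suc_right[OF P] del: p_iter.simps)
  have "incseq x"
  proof (rule incseq_SucI)
    show "x n \<le> x (Suc n)" for n
      using step[of n] mult_nonneg_nonneg[OF c_bounds(1)[of n j] less_imp_le[OF \<open>0 < a\<close>]]
      by linarith
  qed
  moreover have "\<forall>n. x n \<le> 1"
    using c_bounds(2) by (simp add: x_def)
  ultimately obtain L where L: "x \<longlonglongrightarrow> L" "\<forall>n. x n \<le> L"
    by (rule incseq_convergent)
  have "(\<lambda>n. (x (Suc n) - x n) / a) \<longlonglongrightarrow> (L - L) / a"
    by (intro tendsto_divide tendsto_diff LIMSEQ_Suc[OF L(1)] L(1) tendsto_const) (use \<open>0 < a\<close> in simp)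
  then have lim: "(\<lambda>n. (x (Suc n) - x n) / a) \<longlonglongrightarrow> 0"
    by simp
  have "fps_nth (c n) j \<le> (x (Suc n) - x n) / a" for n
    using step[of n] \<open>0 < a\<close> by (simp add: pos_le_divide_eq)
  then show ?thesis
    unfolding c_def[symmetric]
    by (intro tendsto_sandwich[where f = "\<lambda>_. 0", OF _ _ tendsto_const lim] always_eventually allI c_bounds)
qed

lemma p_iter_nth_tendsto_zero_const_zero:
  assumes P: "nonneg_summable_fps P" "fps_mass P \<le> 1" and "fps_nth P 1 < 1" and P0: "fps_nth P 0 = 0"
    and "1 \<le> j"
  shows "(\<lambda>n. fps_nth (p_iter P (Suc n)) j) \<longlonglongrightarrow> 0"
  using \<open>1 \<le> j\<close>
proof (induction j rule: less_induct)
  case (less j)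
  define c where "c n = p_iter P (Suc n)" for n
  define e where "e n = (\<Sum>i\<in>{1..<j}. fps_nth (c n) i)" for n
  have e: "e \<longlonglongrightarrow> 0"
    unfolding e_def c_def by (intro tendsto_null_sum less.IH) auto
  have r: "0 \<le> fps_nth P 1 ^ j" "fps_nth P 1 ^ j < 1"
    using nonneg_summable_fpsD(1)[OF P(1), of 1] \<open>fps_nth P 1 < 1\<close> less.prems
    by (auto simp: power_less_one_iff)
  have step: "fps_nth (c (Suc n)) j \<le> e n + fps_nth P 1 ^ j * fps_nth (c n) j" for n
    using fps_nth_fps_comp_gen_le_startsby_zero[OF nonneg_summable_fps_p_iter(1)[OF P] P P0 less.prems, of n]
    by (simp add: c_def e_def p_iter_Suc_Suc_right[OF P] del: p_iter.simps)
  show ?case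
    unfolding c_def[symmetric]
    by (rule contraction_tendsto_zero[OF _ step e r]) (simp add: c_def p_iter_nth_bounds(1)[OF P])
qed

lemma p_iter_nth_tendsto_zero:
  assumes "nonneg_summable_fps P" "fps_mass P \<le> 1" "\<And>i. fps_nth P i < 1" "1 \<le> j"
  shows "(\<lambda>n. fps_nth (p_iter P (Suc n)) j) \<longlonglongrightarrow> 0"
  using assms p_iter_nth_tendsto_zero_const_pos[of P j] p_iter_nth_tendsto_zero_const_zero[of P j]
    nonneg_summable_fpsD(1)[OF assms(1), of 0]
  by (cases "fps_nth P 0 = 0") auto

lemma a_sup_bounds:
  assumes "\<And>k. 1 \<le> k \<Longrightarrow> \<bar>fps_nth (p_iter p n) k\<bar> \<le> B"
  shows "0 \<le> a_sup p n" "a_sup p n \<le> B" "1 \<le> k \<Longrightarrow> \<bar>fps_nth (p_iter p n) k\<bar> \<le> a_sup p n"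
proof -
  have bdd: "bdd_above ((\<lambda>k. \<bar>fps_nth (p_iter p n) k\<bar>) ` {1..})"
    using assms by (intro bdd_aboveI2) auto
  show "0 \<le> a_sup p n"
    unfolding a_sup_def by (rule cSUP_upper2[OF bdd, of 1]) auto
  show "a_sup p n \<le> B"
    unfolding a_sup_def using assms by (intro cSUP_least) auto
  show "\<bar>fps_nth (p_iter p n) k\<bar> \<le> a_sup p n" if "1 \<le> k"
    unfolding a_sup_def using that by (intro cSUP_upper[OF _ bdd]) auto
qed

lemma a_sup_tendsto_zero_nonneg:
  assumes P: "nonneg_summable_fps P" "fps_mass P \<le> 1" and lt: "\<And>i. fps_nth P i < 1"
  shows "(\<lambda>n. a_sup P n) \<longlonglongrightarrow> 0"
proof -
  have "(\<lambda>n. a_sup P (n + 2)) \<longlonglongrightarrow> 0"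
  proof (rule LIMSEQ_I)
    fix \<epsilon> :: real assume "0 < \<epsilon>"
    obtain J where J: "\<And>i k. J \<le> i \<Longrightarrow> fps_nth (P ^ i) k \<le> \<epsilon> / 2"
      using eventually_fps_nth_power_le[OF P lt, of "\<epsilon> / 2"] \<open>0 < \<epsilon>\<close>
      by (auto simp: eventually_sequentially)
    define G where "G n = (\<Sum>i\<in>{1..<J}. fps_nth (p_iter P (Suc n)) i)" for n
    have "G \<longlonglongrightarrow> 0"
      unfolding G_def by (intro tendsto_null_sum p_iter_nth_tendsto_zero[OF P lt]) auto
    then have "\<forall>\<^sub>F n in sequentially. G n < \<epsilon> / 2"
      using \<open>0 < \<epsilon>\<close> by (intro order_tendstoD(2)) auto
    then obtain N where N: "\<And>n. N \<le> n \<Longrightarrow> G n < \<epsilon> / 2"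
      by (auto simp: eventually_sequentially)
    have coeff_le: "\<bar>fps_nth (p_iter P (n + 2)) k\<bar> \<le> G n + \<epsilon> / 2" if "1 \<le> k" for n k
    proof -
      have "fps_nth (p_iter P (n + 2)) k \<le> G n + \<epsilon> / 2 * fps_mass (p_iter P (Suc n))"
        unfolding G_def add_2_eq_Suc' p_iter_Suc_Suc_right[OF P]
        using fps_nth_fps_comp_gen_le[OF nonneg_summable_fps_p_iter(1)[OF P] P J _ that] \<open>0 < \<epsilon>\<close>
        by (simp add: less_imp_le)
      also have "\<dots> \<le> G n + \<epsilon> / 2"
        using nonneg_summable_fps_p_iter(2)[OF P, of n] \<open>0 < \<epsilon>\<close> by simp
      finally show ?thesis
        using p_iter_nth_bounds(1)[OF P, of "Suc n" k] by simp
    qed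
    have "norm (a_sup P (n + 2) - 0) < \<epsilon>" if "N \<le> n" for n
      using a_sup_bounds(1,2)[OF coeff_le[where n = n]] N[OF that] by simp
    then show "\<exists>n0. \<forall>n\<ge>n0. norm (a_sup P (n + 2) - 0) < \<epsilon>"
      by blast
  qed
  then show ?thesis
    by (rule LIMSEQ_offset)
qed

lemma a_sup_le_a_sup_fps_abs:
  assumes "summable (\<lambda>i. \<bar>fps_nth p i\<bar>)" "(\<Sum>i. \<bar>fps_nth p i\<bar>) \<le> 1" "1 \<le> n"
  shows "0 \<le> a_sup p n" "a_sup p n \<le> a_sup (fps_abs p) n"
proof -
  obtain m where n: "n = Suc m"
    using \<open>1 \<le> n\<close> by (cases n) auto
  have P: "nonneg_summable_fps (fps_abs p)" "fps_mass (fps_abs p) \<le> 1"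
    using nonneg_summable_fps_abs[OF assms(1)] assms(2) by auto
  have maj: "\<bar>fps_nth (p_iter p n) k\<bar> \<le> fps_nth (p_iter (fps_abs p) n) k" for k
    unfolding n by (rule abs_fps_nth_p_iter_le[OF assms(1,2)])
  have "\<bar>fps_nth (p_iter (fps_abs p) n) k\<bar> \<le> 1" for k
    using p_iter_nth_bounds[OF P] by (simp add: n)
  then have "\<bar>fps_nth (p_iter (fps_abs p) n) k\<bar> \<le> a_sup (fps_abs p) n" if "1 \<le> k" for k
    using that by (rule a_sup_bounds(3))
  then have "\<bar>fps_nth (p_iter p n) k\<bar> \<le> a_sup (fps_abs p) n" if "1 \<le> k" for k
    using maj[of k] abs_ge_self[of "fps_nth (p_iter (fps_abs p) n) k"] that by fastforce
  then show "0 \<le> a_sup p n" "a_sup p n \<le> a_sup (fps_abs p) n"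
    using a_sup_bounds(1,2) by auto
qed

theorem corollary2:
  fixes p :: "real fps"
  assumes "\<And>i. -1 < fps_nth p i \<and> fps_nth p i < 1"
    and "summable (\<lambda>i. \<bar>fps_nth p i\<bar>)"
    and "(\<Sum>i. \<bar>fps_nth p i\<bar>) \<le> 1"
  shows "(\<lambda>n. a_sup p n) \<longlonglongrightarrow> 0"
proof (rule tendsto_sandwich[where f = "\<lambda>_. 0" and h = "\<lambda>n. a_sup (fps_abs p) n"])
  show "\<forall>\<^sub>F n in sequentially. 0 \<le> a_sup p n" "\<forall>\<^sub>F n in sequentially. a_sup p n \<le> a_sup (fps_abs p) n"
    using a_sup_le_a_sup_fps_abs[OF assms(2,3)] by (auto intro: eventually_sequentiallyI)
  have "nonneg_summable_fps (fps_abs p)" "fps_mass (fps_abs p) \<le> 1" "\<And>i. fps_nth (fps_abs p) i < 1"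
    using nonneg_summable_fps_abs[OF assms(2)] assms(1,3) by (auto simp: abs_less_iff)
  then show "(\<lambda>n. a_sup (fps_abs p) n) \<longlonglongrightarrow> 0"
    by (rule a_sup_tendsto_zero_nonneg)
qed simp

end
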